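(* Let $V$ be a finite set of truth values and $\models_{\mathcal{D},\mathcal{D}}$ a pure consequence truth-relation on $V$ (constant expressive semantics). Then it admits exactly the same regular connectives as classical logic: a regularity rule is satisfied by some connective for $\models_{\mathcal{D},\mathcal{D}}$ iff it is satisfied by some classical connective.
   Context: $V$ contains distinct $1,0$; $\mathcal{D}\subseteq V$ with $1\in\mathcal{D}$, $0\notin\mathcal{D}$; $\gamma\models_{\mathcal{D},\mathcal{D}}\delta$ iff ($\gamma\subseteq\mathcal{D}\Rightarrow\delta\cap\mathcal{D}\neq\emptyset$). Semantics: valuations mapping atoms to $V$, connectives interpreted by fixed truth functions, extended compositionally, every assignment to finitely many distinct atoms realized; constant expressive: every value is the constant value of some formula. $\Gamma\vdash\Delta$ iff $v(\Gamma)\models v(\Delta)$ for all $v$. An $n$-ary connective $C$ is regular with rule $(\mathcal{B}^p,\mathcal{B}^c)$, $\mathcal{B}^p,\mathcal{B}^c\subseteq\mathcal{P}(\{1..n\})^2$, if for all $\Gamma,\Delta,F_1..F_n$: $\Gamma\cup\{C(\vec F)\}\vdash\Delta$ iff for all $(B_p,B_c)\in\mathcal{B}^p$, $\Gamma\cup\{F_i:i\in B_p\}\vdash\{F_i:i\in B_c\}\cup\Delta$; $\Gamma\vdash\{C(\vec F)\}\cup\Delta$ iff the same for all $(B_p,B_c)\in\mathcal{B}^c$. Classical logic: $V=\{0,1\}$ with relation $\models_{\{1\},\{1\}}$; classical connectives are truth functions $\{0,1\}^n\to\{0,1\}$. *)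

theory Defs
  imports Main
begin

datatype form = Atom nat | App nat "form list"

fun wf_form :: "(nat \<Rightarrow> nat) \<Rightarrow> form \<Rightarrow> bool" where
  "wf_form ar (Atom p) = True"
| "wf_form ar (App c Fs) = (length Fs = ar c \<and> list_all (wf_form ar) Fs)"

fun eval :: "(nat \<Rightarrow> 'v list \<Rightarrow> 'v) \<Rightarrow> (nat \<Rightarrow> 'v) \<Rightarrow> form \<Rightarrow> 'v" where
  "eval I v (Atom p) = v p"
| "eval I v (App c Fs) = I c (map (eval I v) Fs)"

text \<open>Valuations: all maps from atoms to V (so every assignment to finitely many
  distinct atoms is realized).\<close>
definition valuation :: "'v set \<Rightarrow> (nat \<Rightarrow> 'v) \<Rightarrow> bool" where
  "valuation V v \<longleftrightarrow> (\<forall>p. v p \<in> V)"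

definition pure_models :: "'v set \<Rightarrow> 'v set \<Rightarrow> 'v set \<Rightarrow> bool" where
  "pure_models D \<gamma> \<delta> \<longleftrightarrow> (\<gamma> \<subseteq> D \<longrightarrow> \<delta> \<inter> D \<noteq> {})"

definition sem_ok :: "'v set \<Rightarrow> (nat \<Rightarrow> nat) \<Rightarrow> (nat \<Rightarrow> 'v list \<Rightarrow> 'v) \<Rightarrow> bool" where
  "sem_ok V ar I \<longleftrightarrow> (\<forall>c xs. length xs = ar c \<and> set xs \<subseteq> V \<longrightarrow> I c xs \<in> V)"

definition const_expressive :: "'v set \<Rightarrow> (nat \<Rightarrow> nat) \<Rightarrow> (nat \<Rightarrow> 'v list \<Rightarrow> 'v) \<Rightarrow> bool" where
  "const_expressive V ar I \<longleftrightarrow>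
     (\<forall>x\<in>V. \<exists>F. wf_form ar F \<and> (\<forall>v. valuation V v \<longrightarrow> eval I v F = x))"

definition cons :: "'v set \<Rightarrow> 'v set \<Rightarrow> (nat \<Rightarrow> 'v list \<Rightarrow> 'v) \<Rightarrow> form set \<Rightarrow> form set \<Rightarrow> bool" where
  "cons V D I \<Gamma> \<Delta> \<longleftrightarrow>
     (\<forall>v. valuation V v \<longrightarrow> pure_models D (eval I v ` \<Gamma>) (eval I v ` \<Delta>))"

text \<open>The n-ary connective c is regular with rule (Bp, Bc); indices of arguments are 1..n.\<close>
definition regular ::
  "'v set \<Rightarrow> 'v set \<Rightarrow> (nat \<Rightarrow> nat) \<Rightarrow> (nat \<Rightarrow> 'v list \<Rightarrow> 'v) \<Rightarrow> nat \<Rightarrow> nat \<Rightarrow>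
   (nat set \<times> nat set) set \<Rightarrow> (nat set \<times> nat set) set \<Rightarrow> bool" where
  "regular V D ar I c n Bp Bc \<longleftrightarrow> ar c = n \<and>
     (\<forall>\<Gamma> \<Delta> F. (\<forall>G\<in>\<Gamma>. wf_form ar G) \<and> (\<forall>G\<in>\<Delta>. wf_form ar G) \<and> (\<forall>i\<in>{1..n}. wf_form ar (F i)) \<longrightarrow>
        (cons V D I (\<Gamma> \<union> {App c (map F [1..<n+1])}) \<Delta> \<longleftrightarrow>
           (\<forall>(P, Q)\<in>Bp. cons V D I (\<Gamma> \<union> F ` P) (F ` Q \<union> \<Delta>)))
      \<and> (cons V D I \<Gamma> ({App c (map F [1..<n+1])} \<union> \<Delta>) \<longleftrightarrow>
           (\<forall>(P, Q)\<in>Bc. cons V D I (\<Gamma> \<union> F ` P) (F ` Q \<union> \<Delta>))))"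

definition rule_admitted ::
  "'v set \<Rightarrow> 'v set \<Rightarrow> nat \<Rightarrow> (nat set \<times> nat set) set \<Rightarrow> (nat set \<times> nat set) set \<Rightarrow> bool" where
  "rule_admitted V D n Bp Bc \<longleftrightarrow>
     (\<exists>ar I c. sem_ok V ar I \<and> const_expressive V ar I \<and> regular V D ar I c n Bp Bc)"

end

theory Submission
  imports Defs
begin

text \<open>A connective with rule (Bp, Bc) must make C(F) designated exactly when the designation
  pattern of the arguments refutes one of the sequents in Bp, and also exactly when it refutes none
  of the sequents in Bc. Feeding constant formulas of value 1 and 0 as arguments (constant
  expressiveness) realises every Boolean pattern, so a rule is admitted only if these two Boolean
  conditions are complementary; conversely a complementary rule is realised by the connective
  returning 1 or 0 according to the first condition. Complementarity mentions neither V nor D, so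
  every such truth-relation admits the same rules as classical logic.\<close>

text \<open>A pair (P, Q) stands for the sequent with premises F i, i in P, and conclusions F i, i in Q;
  b i says whether F i is designated.\<close>
definition refutes :: "(nat \<Rightarrow> bool) \<Rightarrow> nat set \<Rightarrow> nat set \<Rightarrow> bool" where
  "refutes b P Q \<longleftrightarrow> (\<forall>i\<in>P. b i) \<and> (\<forall>i\<in>Q. \<not> b i)"

definition complementary_rule :: "(nat set \<times> nat set) set \<Rightarrow> (nat set \<times> nat set) set \<Rightarrow> bool" where
  "complementary_rule Bp Bc \<longleftrightarrow>
     (\<forall>b. (\<exists>(P, Q)\<in>Bp. refutes b P Q) \<longleftrightarrow> \<not> (\<exists>(P, Q)\<in>Bc. refutes b P Q))"

lemma refutes_cong:
  assumes "\<And>i. i \<in> P \<union> Q \<Longrightarrow> b i = b' i"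
  shows "refutes b P Q = refutes b' P Q"
  using assms unfolding refutes_def by auto

lemma cons_iff:
  "cons V D I \<Gamma> \<Delta> \<longleftrightarrow>
     (\<forall>v. valuation V v \<longrightarrow> (\<forall>G\<in>\<Gamma>. eval I v G \<in> D) \<longrightarrow> (\<exists>G\<in>\<Delta>. eval I v G \<in> D))"
  unfolding cons_def pure_models_def by (simp add: image_subset_iff disjoint_iff)

lemma cons_iff_pure_models_at:
  assumes "valuation V v\<^sub>0"
    and "\<And>v G. valuation V v \<Longrightarrow> G \<in> \<Gamma> \<union> \<Delta> \<Longrightarrow> eval I v G = eval I v\<^sub>0 G"
  shows "cons V D I \<Gamma> \<Delta> \<longleftrightarrow> pure_models D (eval I v\<^sub>0 ` \<Gamma>) (eval I v\<^sub>0 ` \<Delta>)"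
proof -
  have "eval I v ` \<Gamma> = eval I v\<^sub>0 ` \<Gamma> \<and> eval I v ` \<Delta> = eval I v\<^sub>0 ` \<Delta>" if "valuation V v" for v
    using assms(2)[OF that] by (auto intro!: image_cong)
  then show ?thesis
    unfolding cons_def using assms(1) by metis
qed

text \<open>Both halves of regularity: A = {t}, B = {} for the premise rule and A = {}, B = {t} for the
  conclusion rule.\<close>
lemma cons_iff_ball_sequents:
  assumes "\<And>v. valuation V v \<Longrightarrow>
      ((\<forall>G\<in>A. eval I v G \<in> D) \<and> (\<forall>G\<in>B. eval I v G \<notin> D)) \<longleftrightarrow>
      (\<exists>(P, Q)\<in>Bs. refutes (\<lambda>i. eval I v (F i) \<in> D) P Q)"
  shows "cons V D I (\<Gamma> \<union> A) (B \<union> \<Delta>) \<longleftrightarrow> (\<forall>(P, Q)\<in>Bs. cons V D I (\<Gamma> \<union> F ` P) (F ` Q \<union> \<Delta>))"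
proof -
  have pointwise:
    "((\<forall>G\<in>\<Gamma> \<union> A. eval I v G \<in> D) \<longrightarrow> (\<exists>G\<in>B \<union> \<Delta>. eval I v G \<in> D)) \<longleftrightarrow>
     (\<forall>(P, Q)\<in>Bs. (\<forall>G\<in>\<Gamma> \<union> F ` P. eval I v G \<in> D) \<longrightarrow> (\<exists>G\<in>F ` Q \<union> \<Delta>. eval I v G \<in> D))"
    (is "?lhs v \<longleftrightarrow> ?rhs v") if "valuation V v" for v
  proof -
    have "?lhs v \<longleftrightarrow>
      ((\<forall>G\<in>\<Gamma>. eval I v G \<in> D) \<and> ((\<forall>G\<in>A. eval I v G \<in> D) \<and> (\<forall>G\<in>B. eval I v G \<notin> D))
        \<longrightarrow> (\<exists>G\<in>\<Delta>. eval I v G \<in> D))"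
      by blast
    also have "\<dots> \<longleftrightarrow> ((\<forall>G\<in>\<Gamma>. eval I v G \<in> D) \<and> (\<exists>(P, Q)\<in>Bs. refutes (\<lambda>i. eval I v (F i) \<in> D) P Q)
        \<longrightarrow> (\<exists>G\<in>\<Delta>. eval I v G \<in> D))"
      by (simp only: assms[OF that])
    also have "\<dots> \<longleftrightarrow> ?rhs v"
      unfolding refutes_def by (simp add: ball_Un bex_Un Bex_def Ball_def) blast
    finally show ?thesis .
  qed
  have "cons V D I (\<Gamma> \<union> A) (B \<union> \<Delta>) \<longleftrightarrow> (\<forall>v. valuation V v \<longrightarrow> ?rhs v)"
    unfolding cons_iff using pointwise by simp
  then show ?thesis
    unfolding cons_iff by (auto simp: Ball_def)
qed

lemma regularI:
  assumes "ar c = n" and "complementary_rule Bp Bc"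
    and "\<And>F v. valuation V v \<Longrightarrow>
      eval I v (App c (map F [1..<n+1])) \<in> D \<longleftrightarrow> (\<exists>(P, Q)\<in>Bp. refutes (\<lambda>i. eval I v (F i) \<in> D) P Q)"
  shows "regular V D ar I c n Bp Bc"
  unfolding regular_def
proof (intro conjI allI impI)
  fix \<Gamma> \<Delta> F
  let ?t = "App c (map F [1..<n+1])"
  show "cons V D I (\<Gamma> \<union> {?t}) \<Delta> \<longleftrightarrow> (\<forall>(P, Q)\<in>Bp. cons V D I (\<Gamma> \<union> F ` P) (F ` Q \<union> \<Delta>))"
    by (rule cons_iff_ball_sequents[where B = "{}", simplified]) (use assms(3) in blast)
  show "cons V D I \<Gamma> ({?t} \<union> \<Delta>) \<longleftrightarrow> (\<forall>(P, Q)\<in>Bc. cons V D I (\<Gamma> \<union> F ` P) (F ` Q \<union> \<Delta>))"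
    by (rule cons_iff_ball_sequents[where A = "{}", simplified])
      (use assms(2,3) in \<open>auto simp: complementary_rule_def simp del: upt_Suc\<close>)
qed (fact assms(1))

lemma regular_imp_complementary_rule:
  assumes ce: "const_expressive V ar I" and reg: "regular V D ar I c n Bp Bc"
    and "one \<in> D" "D \<subseteq> V" "zero \<in> V" "zero \<notin> D"
  shows "complementary_rule Bp Bc"
  unfolding complementary_rule_def
proof
  fix b :: "nat \<Rightarrow> bool"
  obtain K where K: "\<And>x. x \<in> V \<Longrightarrow> wf_form ar (K x) \<and> (\<forall>v. valuation V v \<longrightarrow> eval I v (K x) = x)"
    using ce unfolding const_expressive_def by metis
  define F where "F i = K (if b i then one else zero)" for i :: nat
  let ?t = "App c (map F [1..<n+1])"
  define v\<^sub>0 :: "nat \<Rightarrow> _" where "v\<^sub>0 = (\<lambda>_. one)"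
  have v\<^sub>0: "valuation V v\<^sub>0"
    using assms(3,4) unfolding v\<^sub>0_def valuation_def by auto
  have wf_F: "\<forall>i\<in>{1..n}. wf_form ar (F i)"
    using K assms(3-5) unfolding F_def by auto
  have eval_F: "eval I v (F i) = (if b i then one else zero)" if "valuation V v" for v i
    using K assms(3-5) that unfolding F_def by auto
  have closed: "eval I v G = eval I v\<^sub>0 G" if "valuation V v" "G \<in> insert ?t (range F)" for v G
    using that v\<^sub>0 eval_F by (auto simp: comp_def simp del: upt_Suc)
  have des_F: "eval I v\<^sub>0 (F i) \<in> D \<longleftrightarrow> b i" for i
    using eval_F[OF v\<^sub>0] assms(3,6) by simp
  have at_v\<^sub>0: "cons V D I \<Gamma> \<Delta> \<longleftrightarrow> pure_models D (eval I v\<^sub>0 ` \<Gamma>) (eval I v\<^sub>0 ` \<Delta>)"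
    if "\<Gamma> \<union> \<Delta> \<subseteq> insert ?t (range F)" for \<Gamma> \<Delta>
    using that by (intro cons_iff_pure_models_at[OF v\<^sub>0] closed) auto
  have sequent: "cons V D I ({} \<union> F ` P) (F ` Q \<union> {}) \<longleftrightarrow> \<not> refutes b P Q" for P Q
    using at_v\<^sub>0[of "F ` P" "F ` Q"] des_F
    unfolding pure_models_def refutes_def by (auto simp: image_subset_iff disjoint_iff)
  have premise: "cons V D I ({} \<union> {?t}) {} \<longleftrightarrow> eval I v\<^sub>0 ?t \<notin> D"
    using at_v\<^sub>0[of "{?t}" "{}"] unfolding pure_models_def by simp
  have conclusion: "cons V D I {} ({?t} \<union> {}) \<longleftrightarrow> eval I v\<^sub>0 ?t \<in> D"
    using at_v\<^sub>0[of "{}" "{?t}"] unfolding pure_models_def by simp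
  have "(cons V D I ({} \<union> {?t}) {} \<longleftrightarrow> (\<forall>(P, Q)\<in>Bp. cons V D I ({} \<union> F ` P) (F ` Q \<union> {})))
      \<and> (cons V D I {} ({?t} \<union> {}) \<longleftrightarrow> (\<forall>(P, Q)\<in>Bc. cons V D I ({} \<union> F ` P) (F ` Q \<union> {})))"
    using reg wf_F unfolding regular_def by blast
  then show "(\<exists>(P, Q)\<in>Bp. refutes b P Q) \<longleftrightarrow> \<not> (\<exists>(P, Q)\<in>Bc. refutes b P Q)"
    unfolding premise conclusion sequent by blast
qed

lemma complementary_rule_imp_rule_admitted:
  assumes "finite V" "one \<in> D" "D \<subseteq> V" "zero \<in> V" "zero \<notin> D"
    and bounded: "\<forall>(P, Q)\<in>Bp. P \<subseteq> {1..n} \<and> Q \<subseteq> {1..n}"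
    and "complementary_rule Bp Bc"
  shows "rule_admitted V D n Bp Bc"
proof -
  obtain vs where vs: "set vs = V"
    using finite_list[OF assms(1)] by blast
  define ar :: "nat \<Rightarrow> nat" where "ar k = (if k = 0 then n else 0)" for k
  \<comment> \<open>Connective 0 realises the rule, reading argument i at list position i - 1;
    connective k + 1 is the constant vs ! k.\<close>
  define I where "I k xs =
      (if k = 0 then (if \<exists>(P, Q)\<in>Bp. refutes (\<lambda>i. xs ! (i - 1) \<in> D) P Q then one else zero)
       else if k - 1 < length vs then vs ! (k - 1) else one)" for k xs
  have "sem_ok V ar I"
    using assms(2-4) vs unfolding sem_ok_def I_def by auto
  moreover have "const_expressive V ar I"
    unfolding const_expressive_def
  proof
    fix x assume "x \<in> V"
    then obtain k where "k < length vs" "vs ! k = x"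
      using vs by (metis in_set_conv_nth)
    then show "\<exists>F. wf_form ar F \<and> (\<forall>v. valuation V v \<longrightarrow> eval I v F = x)"
      by (intro exI[of _ "App (Suc k) []"]) (simp add: ar_def I_def)
  qed
  moreover have "regular V D ar I 0 n Bp Bc"
  proof (rule regularI)
    fix F v
    let ?xs = "map (eval I v) (map F [1..<n+1])"
    have "refutes (\<lambda>i. ?xs ! (i - 1) \<in> D) P Q \<longleftrightarrow> refutes (\<lambda>i. eval I v (F i) \<in> D) P Q"
      if "(P, Q) \<in> Bp" for P Q
    proof (rule refutes_cong)
      fix i assume "i \<in> P \<union> Q"
      then have "1 \<le> i" "i \<le> n"
        using bspec[OF bounded that] by auto
      then show "(?xs ! (i - 1) \<in> D) = (eval I v (F i) \<in> D)"
        by (simp del: upt_Suc)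
    qed
    then show "eval I v (App 0 (map F [1..<n+1])) \<in> D \<longleftrightarrow>
        (\<exists>(P, Q)\<in>Bp. refutes (\<lambda>i. eval I v (F i) \<in> D) P Q)"
      using assms(2,5) by (auto simp: I_def simp del: upt_Suc)
  qed (simp_all add: ar_def assms(7))
  ultimately show ?thesis
    unfolding rule_admitted_def by blast
qed

lemma rule_admitted_iff_complementary_rule:
  assumes "finite V" "one \<in> D" "D \<subseteq> V" "zero \<in> V" "zero \<notin> D"
    and "\<forall>(P, Q)\<in>Bp. P \<subseteq> {1..n} \<and> Q \<subseteq> {1..n}"
  shows "rule_admitted V D n Bp Bc \<longleftrightarrow> complementary_rule Bp Bc"
  using assms regular_imp_complementary_rule complementary_rule_imp_rule_admitted
  unfolding rule_admitted_def by metis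

theorem theorem6p2:
  fixes V D :: "'v set" and one zero :: 'v and n :: nat
    and Bp Bc :: "(nat set \<times> nat set) set"
  assumes "finite V"
    and "one \<in> V" and "zero \<in> V" and "one \<noteq> zero"
    and "D \<subseteq> V" and "one \<in> D" and "zero \<notin> D"
    and "\<forall>(P, Q)\<in>Bp \<union> Bc. P \<subseteq> {1..n} \<and> Q \<subseteq> {1..n}"
  shows "rule_admitted V D n Bp Bc \<longleftrightarrow> rule_admitted (UNIV :: bool set) {True} n Bp Bc"
proof -
  have bounded: "\<forall>(P, Q)\<in>Bp. P \<subseteq> {1..n} \<and> Q \<subseteq> {1..n}"
    using assms(8) by auto
  have "rule_admitted V D n Bp Bc \<longleftrightarrow> complementary_rule Bp Bc"
    using assms(1,6,5,3,7) bounded by (rule rule_admitted_iff_complementary_rule)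
  also have "\<dots> \<longleftrightarrow> rule_admitted (UNIV :: bool set) {True} n Bp Bc"
    using bounded by (intro rule_admitted_iff_complementary_rule[symmetric]) auto
  finally show ?thesis .
qed

end
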